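(* Let $K$ be a field containing $\mathbb{Q}$ and $n\in\mathbb{N}^+$. Then $\Gamma_n\cong A_n$ as $K$-algebras.
   Context: $\Gamma$ denotes the set of all functions $\mathbb{N}^+\to K$ with pointwise addition and the convolution product $(fg)(m)=\sum_{ab=m}f(a)g(b)$; $\Gamma_n=\{f\in\Gamma: f(m)=0\ \forall m>n\}$ with the truncated product $(fg)(m)=\sum_{ab=m}f(a)g(b)$ for $m\le n$ and $0$ for $m>n$. $X=\{x_1,x_2,\dots\}$, $\mathcal{M}$ is the free commutative monoid on $X$, and $K[[X]]$ is the ring of all functions $\mathcal{M}\to K$. The weight of $x_1^{a_1}\cdots x_k^{a_k}$ is $p_1^{a_1}\cdots p_k^{a_k}$, $p_i$ the $i$-th prime. $I_n\subseteq K[[X]]$ is the set of power series supported on monomials of weight $>n$ (the monomial ideal generated by monomials of weight $>n$), and $A_n=K[[X]]/I_n$. *)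

theory Defs
  imports "HOL-Algebra.QuotRing" "HOL-Library.Multiset" "HOL-Computational_Algebra.Primes" "HOL-Library.Infinite_Set"
begin

(* The i-th prime (0-indexed): p_{i+1} in the paper's notation. *)
definition nth_prime :: "nat \<Rightarrow> nat" where
  "nth_prime i = Infinite_Set.enumerate {p. prime p} i"

(* Monomials of the free commutative monoid on X = {x_1, x_2, ...} are represented as
   multisets of variable indices; index i stands for x_{i+1}. *)
definition weight :: "nat multiset \<Rightarrow> nat" where
  "weight m = (\<Prod>i\<in>#m. nth_prime i)"

definition PS_ring :: "('a::field) itself \<Rightarrow> (nat multiset \<Rightarrow> 'a) ring" where
  "PS_ring _ = \<lparr>carrier = UNIV,
     monoid.mult = (\<lambda>f g m. \<Sum>a\<in>{a. a \<subseteq># m}. f a * g (m - a)),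
     one = (\<lambda>m. if m = {#} then 1 else 0),
     zero = (\<lambda>m. 0),
     add = (\<lambda>f g m. f m + g m)\<rparr>"

definition PS_const :: "'a::field \<Rightarrow> nat multiset \<Rightarrow> 'a" where
  "PS_const c = (\<lambda>m. if m = {#} then c else 0)"

definition I_ideal :: "('a::field) itself \<Rightarrow> nat \<Rightarrow> (nat multiset \<Rightarrow> 'a) set" where
  "I_ideal _ n = {f. \<forall>m. weight m \<le> n \<longrightarrow> f m = 0}"

definition A_ring :: "('a::field) itself \<Rightarrow> nat \<Rightarrow> (nat multiset \<Rightarrow> 'a) set ring" where
  "A_ring T n = PS_ring T Quot I_ideal T n"

(* Gamma_n: functions N^+ -> K vanishing above n (represented on nat, with value 0 at 0),
   truncated Dirichlet convolution. *)
definition Gamma_ring :: "('a::field) itself \<Rightarrow> nat \<Rightarrow> (nat \<Rightarrow> 'a) ring" where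
  "Gamma_ring _ n = \<lparr>carrier = {f. \<forall>m. (m = 0 \<or> m > n) \<longrightarrow> f m = 0},
     monoid.mult = (\<lambda>f g m. if 1 \<le> m \<and> m \<le> n then (\<Sum>a\<in>{a. a dvd m}. f a * g (m div a)) else 0),
     one = (\<lambda>m. if m = 1 \<and> 1 \<le> n then 1 else 0),
     zero = (\<lambda>m. 0),
     add = (\<lambda>f g m. f m + g m)\<rparr>"

(* K-algebra isomorphism Gamma_n -> A_n: a ring isomorphism that is K-linear, where
   K acts on Gamma_n pointwise and on A_n via the class of the constant series c. *)
definition K_alg_iso :: "('a::field) itself \<Rightarrow> nat \<Rightarrow> ((nat \<Rightarrow> 'a) \<Rightarrow> (nat multiset \<Rightarrow> 'a) set) \<Rightarrow> bool" where
  "K_alg_iso T n \<phi> \<longleftrightarrow>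
     \<phi> \<in> ring_iso (Gamma_ring T n) (A_ring T n) \<and>
     (\<forall>c::'a. \<forall>f\<in>carrier (Gamma_ring T n).
        \<phi> (\<lambda>m. c * f m) =
          (I_ideal T n +>\<^bsub>PS_ring T\<^esub> PS_const c) \<otimes>\<^bsub>A_ring T n\<^esub> \<phi> f)"

end

theory Submission
  imports Defs
begin

(* By unique factorization, the weight map is a bijection from monomials onto the positive
   integers which turns sums of monomials into products; hence the submonomials of m are
   mapped exactly onto the divisors of weight m. Composing with the weight therefore carries
   Dirichlet convolution to the Cauchy product of power series. Truncation at n corresponds to
   reduction modulo I_n, because every factor of a monomial of weight at most n again has
   weight at most n. *)

lemma prime_nth_prime: "prime (nth_prime i)"
  unfolding nth_prime_def using enumerate_in_set[OF primes_infinite] by auto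

lemma inj_nth_prime: "inj nth_prime"
  unfolding nth_prime_def
  by (intro strict_mono_imp_inj_on strict_mono_enumerate primes_infinite)

lemma range_nth_prime: "range nth_prime = {p. prime p}"
  unfolding nth_prime_def by (rule range_enumerate[OF primes_infinite])

lemma weight_eq_prod_mset: "weight m = prod_mset (image_mset nth_prime m)"
  unfolding weight_def by simp

lemma weight_empty [simp]: "weight {#} = 1"
  by (simp add: weight_def)

lemma weight_plus: "weight (a + b) = weight a * weight b"
  unfolding weight_def by simp

lemma prime_factorization_weight: "prime_factorization (weight m) = image_mset nth_prime m"
  unfolding weight_eq_prod_mset
  by (rule prime_factorization_prod_mset_primes) (auto simp: prime_nth_prime)

lemma weight_pos: "weight m > 0"
proof -
  have "weight m \<noteq> 0"
    unfolding weight_eq_prod_mset using prime_nth_prime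
    by (auto simp: prod_mset_zero_iff) (metis not_prime_0)
  then show ?thesis by simp
qed

lemma inj_weight: "inj weight"
proof (rule injI)
  fix a b assume "weight a = weight b"
  then have "image_mset nth_prime a = image_mset nth_prime b"
    by (metis prime_factorization_weight)
  then show "a = b"
    using inj_nth_prime by (metis image_mset_map_of multiset.inj_map_strong inj_def)
qed

lemma weight_eq_1_iff [simp]: "weight m = 1 \<longleftrightarrow> m = {#}"
  using inj_weight[THEN injD, of m "{#}"] by auto

lemma range_weight: "range weight = {k. k > 0}"
proof (intro equalityI subsetI)
  fix k :: nat assume "k \<in> {k. k > 0}"
  then have k: "k > 0" by simp
  define m where "m = image_mset (inv_into UNIV nth_prime) (prime_factorization k)"
  have "image_mset nth_prime m = prime_factorization k"
    unfolding m_def multiset.map_comp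
    by (rule multiset.map_ident_strong)
       (metis comp_apply f_inv_into_f in_prime_factors_imp_prime mem_Collect_eq range_nth_prime)
  then have "weight m = k"
    unfolding weight_eq_prod_mset using k by (simp add: prod_mset_prime_factorization)
  then show "k \<in> range weight" by (metis rangeI)
qed (auto simp: weight_pos)

lemma weight_diff: "a \<subseteq># m \<Longrightarrow> weight (m - a) = weight m div weight a"
  by (metis subset_mset.add_diff_inverse weight_plus weight_pos nonzero_mult_div_cancel_left
        less_numeral_extra(3))

lemma weight_submsets: "weight ` {a. a \<subseteq># m} = {d. d dvd weight m}"
proof (intro equalityI subsetI)
  fix d assume "d \<in> {d. d dvd weight m}"
  then obtain e where e: "weight m = d * e" by auto
  then have "d > 0" "e > 0" using weight_pos[of m] by auto
  then obtain a b where "d = weight a" "e = weight b"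
    using range_weight by (metis (mono_tags) imageE mem_Collect_eq)
  with e have "m = a + b" using inj_weight by (metis weight_plus injD)
  then show "d \<in> weight ` {a. a \<subseteq># m}" using \<open>d = weight a\<close> by auto
qed (auto, metis subset_mset.add_diff_inverse weight_plus dvd_triv_left)

lemma weight_mono: "a \<subseteq># m \<Longrightarrow> weight a \<le> weight m"
  using weight_submsets[of m] weight_pos[of m] by (auto intro: dvd_imp_le)

lemma finite_submsets: "finite {a. a \<subseteq># (m :: nat multiset)}"
proof (rule finite_imageD)
  show "finite (weight ` {a. a \<subseteq># m})"
    unfolding weight_submsets using weight_pos[of m] by (simp add: finite_divisors_nat)
qed (rule inj_on_subset[OF inj_weight, simplified])

lemma sum_submsets_weight:
  "(\<Sum>a\<in>{a. a \<subseteq># m}. F (weight a)) = (\<Sum>d | d dvd weight m. F d)"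
  using sum.reindex[OF inj_on_subset[OF inj_weight subset_UNIV], of F "{a. a \<subseteq># m}"]
  by (simp add: weight_submsets)

definition ps_mult :: "(nat multiset \<Rightarrow> 'a::field) \<Rightarrow> (nat multiset \<Rightarrow> 'a) \<Rightarrow> nat multiset \<Rightarrow> 'a"
  where "ps_mult f g m = (\<Sum>a | a \<subseteq># m. f a * g (m - a))"

definition A_class :: "nat \<Rightarrow> (nat multiset \<Rightarrow> 'a::field) \<Rightarrow> (nat multiset \<Rightarrow> 'a) set"
  where "A_class n f = {g. \<forall>m. weight m \<le> n \<longrightarrow> g m = f m}"

lemma PS_ring_mult: "f \<otimes>\<^bsub>PS_ring T\<^esub> g = ps_mult f g"
  by (simp add: PS_ring_def ps_mult_def fun_eq_iff)

lemma PS_ring_carrier: "carrier (PS_ring T) = UNIV"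
  by (simp add: PS_ring_def)

lemma PS_ring_one: "\<one>\<^bsub>PS_ring T\<^esub> = (\<lambda>m. if m = {#} then 1 else 0)"
  by (simp add: PS_ring_def)

lemma A_class_self: "f \<in> A_class n f"
  unfolding A_class_def by simp

lemma A_class_eq_iff: "A_class n f = A_class n g \<longleftrightarrow> (\<forall>m. weight m \<le> n \<longrightarrow> f m = g m)"
proof
  assume "A_class n f = A_class n g"
  then have "f \<in> A_class n g" using A_class_self by metis
  then show "\<forall>m. weight m \<le> n \<longrightarrow> f m = g m" by (simp add: A_class_def)
qed (simp add: A_class_def)

lemma r_coset_I_ideal: "I_ideal T n +>\<^bsub>PS_ring T\<^esub> f = A_class n f"
proof -
  have "I_ideal T n +>\<^bsub>PS_ring T\<^esub> f = (\<Union>h\<in>I_ideal T n. {\<lambda>m. h m + f m})"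
    by (simp add: a_r_coset_def r_coset_def PS_ring_def)
  also have "\<dots> = A_class n f"
  proof (intro equalityI subsetI)
    fix g assume "g \<in> A_class n f"
    then have "(\<lambda>m. g m - f m) \<in> I_ideal T n" "g = (\<lambda>m. (g m - f m) + f m)"
      by (auto simp: I_ideal_def A_class_def)
    then show "g \<in> (\<Union>h\<in>I_ideal T n. {\<lambda>m. h m + f m})" by blast
  qed (auto simp: I_ideal_def A_class_def)
  finally show ?thesis .
qed

lemma carrier_A_ring: "carrier (A_ring T n) = range (A_class n)"
proof -
  have "carrier (A_ring T n) = (\<Union>f\<in>carrier (PS_ring T). {I_ideal T n +>\<^bsub>PS_ring T\<^esub> f})"
    by (simp add: A_ring_def FactRing_def A_RCOSETS_def RCOSETS_def a_r_coset_def)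
  then show ?thesis by (auto simp: r_coset_I_ideal PS_ring_carrier)
qed

lemma one_A_ring: "\<one>\<^bsub>A_ring T n\<^esub> = A_class n (\<lambda>m. if m = {#} then 1 else 0)"
proof -
  have "\<one>\<^bsub>A_ring T n\<^esub> = I_ideal T n +>\<^bsub>PS_ring T\<^esub> \<one>\<^bsub>PS_ring T\<^esub>"
    by (simp add: A_ring_def FactRing_def)
  then show ?thesis by (simp add: r_coset_I_ideal PS_ring_one)
qed

lemma add_A_ring: "A_class n f \<oplus>\<^bsub>A_ring T n\<^esub> A_class n g = A_class n (\<lambda>m. f m + g m)"
proof -
  have "A_class n f \<oplus>\<^bsub>A_ring T n\<^esub> A_class n g
      = (\<Union>f'\<in>A_class n f. \<Union>g'\<in>A_class n g. {\<lambda>m. f' m + g' m})"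
    by (simp add: A_ring_def FactRing_def set_add_def set_mult_def PS_ring_def)
  also have "\<dots> = A_class n (\<lambda>m. f m + g m)"
  proof (intro equalityI subsetI)
    fix h assume "h \<in> A_class n (\<lambda>m. f m + g m)"
    then have "(\<lambda>m. h m - g m) \<in> A_class n f" "h = (\<lambda>m. (h m - g m) + g m)"
      by (auto simp: A_class_def)
    then show "h \<in> (\<Union>f'\<in>A_class n f. \<Union>g'\<in>A_class n g. {\<lambda>m. f' m + g' m})"
      using A_class_self[of g n] by blast
  qed (auto simp: A_class_def)
  finally show ?thesis .
qed

lemma ps_mult_A_class_cong:
  assumes "f' \<in> A_class n f" "g' \<in> A_class n g"
  shows "A_class n (ps_mult f' g') = A_class n (ps_mult f g)"
  unfolding A_class_eq_iff
proof (intro allI impI)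
  fix m assume m: "weight m \<le> n"
  have "f' a * g' (m - a) = f a * g (m - a)" if "a \<subseteq># m" for a
  proof -
    have "weight a \<le> n" "weight (m - a) \<le> n"
      using that m weight_mono[of a m] weight_mono[of "m - a" m] by auto
    then show ?thesis using assms by (simp add: A_class_def)
  qed
  then show "ps_mult f' g' m = ps_mult f g m"
    unfolding ps_mult_def by (intro sum.cong) auto
qed

lemma mult_A_ring: "A_class n f \<otimes>\<^bsub>A_ring T n\<^esub> A_class n g = A_class n (ps_mult f g)"
proof -
  have "A_class n f \<otimes>\<^bsub>A_ring T n\<^esub> A_class n g
      = (\<Union>f'\<in>A_class n f. \<Union>g'\<in>A_class n g. A_class n (ps_mult f' g'))"
    by (simp add: A_ring_def FactRing_def rcoset_mult_def r_coset_I_ideal PS_ring_mult)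
  also have "\<dots> = A_class n (ps_mult f g)"
    using ps_mult_A_class_cong[of _ n f _ g] A_class_self[of f n] A_class_self[of g n] by blast
  finally show ?thesis .
qed

lemma ps_mult_PS_const: "ps_mult (PS_const c) f m = c * f m"
proof -
  have "ps_mult (PS_const c) f m = (\<Sum>a | a \<subseteq># m. if a = {#} then c * f (m - a) else 0)"
    unfolding ps_mult_def PS_const_def by (intro sum.cong) auto
  also have "\<dots> = c * f m"
    using finite_submsets[of m] by (simp add: sum.delta')
  finally show ?thesis .
qed

definition Gamma_to_A :: "nat \<Rightarrow> (nat \<Rightarrow> 'a::field) \<Rightarrow> (nat multiset \<Rightarrow> 'a) set"
  where "Gamma_to_A n f = A_class n (f \<circ> weight)"

lemma Gamma_ring_mult_weight:
  assumes "weight m \<le> n"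
  shows "(f \<otimes>\<^bsub>Gamma_ring T n\<^esub> g) (weight m) = ps_mult (f \<circ> weight) (g \<circ> weight) m"
proof -
  have "(f \<otimes>\<^bsub>Gamma_ring T n\<^esub> g) (weight m) = (\<Sum>d | d dvd weight m. f d * g (weight m div d))"
    using assms weight_pos[of m] by (simp add: Gamma_ring_def)
  also have "\<dots> = (\<Sum>a | a \<subseteq># m. f (weight a) * g (weight m div weight a))"
    by (rule sum_submsets_weight[symmetric])
  also have "\<dots> = ps_mult (f \<circ> weight) (g \<circ> weight) m"
    unfolding ps_mult_def by (intro sum.cong) (auto simp: weight_diff)
  finally show ?thesis .
qed

lemma Gamma_to_A_ring_hom: "Gamma_to_A n \<in> ring_hom (Gamma_ring T n) (A_ring T n)"
proof (rule ring_hom_memI)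
  fix f g
  show "Gamma_to_A n (f \<otimes>\<^bsub>Gamma_ring T n\<^esub> g) = Gamma_to_A n f \<otimes>\<^bsub>A_ring T n\<^esub> Gamma_to_A n g"
    unfolding Gamma_to_A_def mult_A_ring A_class_eq_iff
    using Gamma_ring_mult_weight by (metis comp_apply)
  show "Gamma_to_A n (f \<oplus>\<^bsub>Gamma_ring T n\<^esub> g) = Gamma_to_A n f \<oplus>\<^bsub>A_ring T n\<^esub> Gamma_to_A n g"
    unfolding Gamma_to_A_def add_A_ring by (simp add: Gamma_ring_def comp_def)
  show "Gamma_to_A n \<one>\<^bsub>Gamma_ring T n\<^esub> = \<one>\<^bsub>A_ring T n\<^esub>"
    unfolding Gamma_to_A_def one_A_ring A_class_eq_iff using weight_pos weight_eq_1_iff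
    by (simp add: Gamma_ring_def Suc_le_eq)
qed (simp add: Gamma_to_A_def carrier_A_ring)

lemma Gamma_to_A_bij: "bij_betw (Gamma_to_A n) (carrier (Gamma_ring T n)) (carrier (A_ring T n))"
proof (rule bij_betw_imageI)
  show "inj_on (Gamma_to_A n) (carrier (Gamma_ring T n))"
  proof (rule inj_onI)
    fix f g assume f: "f \<in> carrier (Gamma_ring T n)" and g: "g \<in> carrier (Gamma_ring T n)"
      and "Gamma_to_A n f = Gamma_to_A n g"
    then have fg: "f (weight m) = g (weight m)" if "weight m \<le> n" for m
      using that by (simp add: Gamma_to_A_def A_class_eq_iff)
    show "f = g"
    proof
      fix k
      show "f k = g k"
      proof (cases "0 < k \<and> k \<le> n")
        case True
        then obtain m where "k = weight m" using range_weight by blast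
        then show ?thesis using fg True by simp
      qed (use f g in \<open>auto simp: Gamma_ring_def\<close>)
    qed
  qed
  show "Gamma_to_A n ` carrier (Gamma_ring T n) = carrier (A_ring T n)"
  proof (intro equalityI subsetI)
    fix X assume "X \<in> carrier (A_ring T n)"
    then obtain a where X: "X = A_class n a" by (auto simp: carrier_A_ring)
    define f where "f k = (if 0 < k \<and> k \<le> n then a (inv_into UNIV weight k) else 0)" for k
    have "f \<in> carrier (Gamma_ring T n)" by (simp add: Gamma_ring_def f_def)
    moreover have "X = Gamma_to_A n f"
      unfolding X Gamma_to_A_def A_class_eq_iff f_def using weight_pos inj_weight by simp
    ultimately show "X \<in> Gamma_to_A n ` carrier (Gamma_ring T n)" by blast
  qed (auto simp: Gamma_to_A_def carrier_A_ring)
qed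

lemma Gamma_to_A_smult:
  "Gamma_to_A n (\<lambda>m. c * f m) = (I_ideal T n +>\<^bsub>PS_ring T\<^esub> PS_const c) \<otimes>\<^bsub>A_ring T n\<^esub> Gamma_to_A n f"
  unfolding r_coset_I_ideal Gamma_to_A_def mult_A_ring A_class_eq_iff
  by (simp add: ps_mult_PS_const)

theorem mainTheorem5:
  fixes n :: nat
  assumes "n \<ge> 1"
  shows "\<exists>\<phi>. K_alg_iso TYPE('a::field_char_0) n \<phi>"
proof
  show "K_alg_iso TYPE('a) n (Gamma_to_A n)"
    unfolding K_alg_iso_def ring_iso_def
    using Gamma_to_A_ring_hom Gamma_to_A_bij Gamma_to_A_smult by blast
qed

end
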